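(* Let $\Gamma$ be a skew-symmetric graph with three vertices $\{1,2,3\}$ and adjacency entries $a_{1,2}=1$, $a_{1,3}=\alpha$, $a_{2,3}=\beta$ ($\alpha,\beta\in\mathbb F$). Then $\Gamma$ has the Kahan-Poisson property if and only if $(\alpha,\beta)\in\{(0,0),(0,-1),(1,0),(1,-1),(1,1),(-1,-1)\}$.
   Context: $\mathbb F\in\{\mathbb R,\mathbb C\}$. A skew-symmetric graph $\Gamma=(S,A)$ has $A=(a_{i,j})$ skew-symmetric over $\mathbb F$. Its Poisson bracket on $\mathbb F(x_1,x_2,x_3)$ is $\{x_i,x_j\}=a_{i,j}x_ix_j$; its Kahan morphism is $K(x_i)=\tilde x_i$, where $\tilde x_i$ is the unique solution of the linear system $\tilde x_i-x_i=\tilde x_i\sum_ja_{i,j}x_j+x_i\sum_ja_{i,j}\tilde x_j$; $\Gamma$ has the Kahan-Poisson property if $\{\tilde x_i,\tilde x_j\}=a_{i,j}\tilde x_i\tilde x_j$ for all $i,j$. *)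

theory Defs
  imports "HOL-Analysis.Analysis"
begin

text \<open>Vertices are 1, 2, 3.  A point of F^3 is a function p :: nat => F, of which
only p 1, p 2, p 3 are used.  Rational functions in x1,x2,x3 are represented by
the functions they induce on points.\<close>

definition verts :: "nat set" where "verts = {1,2,3}"

definition skew_symmetric :: "(nat \<Rightarrow> nat \<Rightarrow> 'a::real_normed_field) \<Rightarrow> bool" where
  "skew_symmetric A \<longleftrightarrow> (\<forall>i\<in>verts. \<forall>j\<in>verts. A i j = - A j i)"

definition graph3 :: "'a::real_normed_field \<Rightarrow> 'a \<Rightarrow> nat \<Rightarrow> nat \<Rightarrow> 'a" where
  "graph3 \<alpha> \<beta> i j =
     (if (i,j) = (1,2) then 1 else if (i,j) = (2,1) then -1
      else if (i,j) = (1,3) then \<alpha> else if (i,j) = (3,1) then - \<alpha>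
      else if (i,j) = (2,3) then \<beta> else if (i,j) = (3,2) then - \<beta> else 0)"

definition pderiv3 :: "((nat \<Rightarrow> 'a::real_normed_field) \<Rightarrow> 'a) \<Rightarrow> nat \<Rightarrow> (nat \<Rightarrow> 'a) \<Rightarrow> 'a" where
  "pderiv3 f k p = deriv (\<lambda>t. f (p(k := t))) (p k)"

text \<open>Poisson bracket induced by {x_i,x_j} = a_ij x_i x_j (extended by Leibniz rule).\<close>
definition pbracket ::
  "(nat \<Rightarrow> nat \<Rightarrow> 'a::real_normed_field) \<Rightarrow> ((nat \<Rightarrow> 'a) \<Rightarrow> 'a) \<Rightarrow> ((nat \<Rightarrow> 'a) \<Rightarrow> 'a) \<Rightarrow> (nat \<Rightarrow> 'a) \<Rightarrow> 'a" where
  "pbracket A f g p = (\<Sum>i\<in>verts. \<Sum>j\<in>verts. A i j * p i * p j * pderiv3 f i p * pderiv3 g j p)"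

definition kahan_sys :: "(nat \<Rightarrow> nat \<Rightarrow> 'a::real_normed_field) \<Rightarrow> (nat \<Rightarrow> 'a) \<Rightarrow> (nat \<Rightarrow> 'a) \<Rightarrow> bool" where
  "kahan_sys A p y \<longleftrightarrow> (\<forall>i. i \<notin> verts \<longrightarrow> y i = 0) \<and>
     (\<forall>i\<in>verts. y i - p i = y i * (\<Sum>j\<in>verts. A i j * p j) + p i * (\<Sum>j\<in>verts. A i j * y j))"

definition kahan_regular :: "(nat \<Rightarrow> nat \<Rightarrow> 'a::real_normed_field) \<Rightarrow> (nat \<Rightarrow> 'a) \<Rightarrow> bool" where
  "kahan_regular A p \<longleftrightarrow> (\<exists>!y. kahan_sys A p y)"

definition kahan :: "(nat \<Rightarrow> nat \<Rightarrow> 'a::real_normed_field) \<Rightarrow> (nat \<Rightarrow> 'a) \<Rightarrow> nat \<Rightarrow> 'a" where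
  "kahan A p = (THE y. kahan_sys A p y)"

text \<open>Kahan-Poisson property: {x~_i, x~_j} = a_ij x~_i x~_j as rational functions,
i.e. at every point where the Kahan map is defined.\<close>
definition kahan_poisson :: "(nat \<Rightarrow> nat \<Rightarrow> 'a::real_normed_field) \<Rightarrow> bool" where
  "kahan_poisson A \<longleftrightarrow> (\<forall>p. kahan_regular A p \<longrightarrow>
     (\<forall>i\<in>verts. \<forall>j\<in>verts.
        pbracket A (\<lambda>q. kahan A q i) (\<lambda>q. kahan A q j) p = A i j * kahan A p i * kahan A p j))"

end

theory Submission
  imports Defs
begin

(* The Kahan image y of p solves M(p) y = p, where M(p) = I - diag(A p) - diag(p) A, and this
   system is symmetric under (p, y) |-> (-y, -p).  Differentiating it along coordinate lines
   gives M(p) K'(p) = M(-y), so the Kahan map K is Poisson at p iff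
   M(-y) P(p) M(-y)^T = M(p) P(y) M(p)^T with P(p) = diag(p) A diag(p).  Writing y by Cramer's
   rule and clearing denominators turns the difference of the two sides into a polynomial
   matrix in p.  For the six listed graphs it vanishes identically.  Conversely, the Kahan map
   is defined near p = 0, so the lowest homogeneous part of this polynomial, of degree 5, must
   vanish; its coefficients cut out exactly the six pairs. *)

section \<open>Matrices of the Kahan discretisation\<close>

definition diag :: "'a::zero^'n \<Rightarrow> 'a^'n^'n" where
  "diag v = (\<chi> i j. if i = j then v $ i else 0)"

lemma diag_mult_vec: "(diag u *v y) $ i = u $ i * (y $ i :: 'a::semiring_1)"
  by (simp add: diag_def matrix_vector_mult_def if_distrib if_distribR cong del: if_weak_cong)

lemma diag_mult_left: "(diag u ** X) $ i $ j = u $ i * (X $ i $ j :: 'a::semiring_1)"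
  by (simp add: diag_def matrix_matrix_mult_def if_distrib if_distribR cong del: if_weak_cong)

lemma mult_diag_right: "(X ** diag u) $ i $ j = X $ i $ j * (u $ j :: 'a::semiring_1)"
  by (simp add: diag_def matrix_matrix_mult_def if_distrib if_distribR cong del: if_weak_cong)

lemma mat_mult_vec: "(mat d *v y) $ i = d * (y $ i :: 'a::semiring_1)"
  by (simp add: mat_def matrix_vector_mult_def if_distrib if_distribR cong del: if_weak_cong)

lemma mat_mult_left: "(mat d ** X) $ i $ j = d * (X $ i $ j :: 'a::semiring_1)"
  by (simp add: mat_def matrix_matrix_mult_def if_distrib if_distribR cong del: if_weak_cong)

lemma mat_mult_right: "(X ** mat d) $ i $ j = X $ i $ j * (d :: 'a::semiring_1)"
  by (simp add: mat_def matrix_matrix_mult_def if_distrib if_distribR cong del: if_weak_cong)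

lemma mat_mult_commute: "mat d ** X = X ** (mat d :: 'a::comm_semiring_1^'n^'n)"
  by (simp add: vec_eq_iff mat_mult_left mat_mult_right mult.commute)

lemma matrix_vector_mult_uminus: "A *v (- y) = - (A *v y :: 'a::comm_ring_1^'n)"
  by (simp add: matrix_vector_mult_def vec_eq_iff sum_negf)

lemma matrix_vector_mult_scale: "(A *v (c *s x)) $ i = c * (A *v x) $ i"
  for c :: "'a::comm_semiring_1"
  by (simp add: matrix_vector_mult_def sum_distrib_left ac_simps)

lemma matrix_vector_mult_axis: "(X *v axis k 1) $ i = X $ i $ (k :: 'n::finite)"
  for X :: "'a::semiring_1^'n^'m"
  by (simp add: matrix_vector_mult_def axis_def if_distrib if_distribR cong del: if_weak_cong)

lemma matrix_mult_entry_column: "(X ** J) $ i $ k = (X *v column k J) $ i"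
  by (simp add: matrix_matrix_mult_def matrix_vector_mult_def column_def)

lemma matrix_mult_uminus_left: "(- X) ** P = - (X ** P :: 'a::comm_ring_1^'n^'m)"
  by (simp add: matrix_matrix_mult_def vec_eq_iff sum_negf)

lemma matrix_mult_uminus_right: "X ** (- P) = - (X ** P :: 'a::comm_ring_1^'n^'m)"
  by (simp add: matrix_matrix_mult_def vec_eq_iff sum_negf)

lemma transpose_diff: "transpose (X - Y) = transpose X - transpose (Y :: 'a::ab_group_add^'n^'m)"
  by (simp add: transpose_def vec_eq_iff)

lemma antisymmetric3_eq_0_iff:
  fixes X :: "'a::field_char_0^3^3"
  assumes "transpose X = - X"
  shows "X = 0 \<longleftrightarrow> X $ 1 $ 2 = 0 \<and> X $ 1 $ 3 = 0 \<and> X $ 2 $ 3 = 0"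
proof -
  have entry: "X $ j $ i = - X $ i $ j" for i j
    using arg_cong [OF assms, of "\<lambda>Y. Y $ i $ j"] by (simp add: transpose_def)
  have diag: "X $ i $ i = 0" for i
    using entry [of i i] by (simp add: eq_neg_iff_add_eq_0 mult_2 [symmetric])
  show ?thesis
    using entry [of 1 2] entry [of 1 3] entry [of 2 3] diag [of 1] diag [of 2] diag [of 3]
    by (auto simp: vec_eq_iff forall_3)
qed

lemma unique_solution_iff_det_nz:
  fixes m :: "'a::field^'n^'n"
  shows "(\<exists>!x. m *v x = c) \<longleftrightarrow> det m \<noteq> 0"
proof
  assume uniq: "\<exists>!x. m *v x = c"
  then obtain x0 where x0: "m *v x0 = c" by blast
  have "inj ((*v) m)"
  proof (rule injI)
    fix x1 x2 assume "m *v x1 = m *v x2"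
    then have "m *v (x0 + x1 - x2) = c"
      by (simp add: x0 matrix_vector_right_distrib matrix_vector_mult_diff_distrib)
    with uniq x0 have "x0 + x1 - x2 = x0" by blast
    then show "x1 = x2" by simp
  qed
  then show "det m \<noteq> 0"
    using det_nz_iff_inj_gen [OF matrix_vector_mul_linear_gen, of m]
    by (simp add: matrix_of_matrix_vector_mul)
next
  assume "det m \<noteq> 0"
  then obtain B where "m ** B = mat 1" "B ** m = mat 1"
    using invertible_det_nz invertible_def by blast
  then show "\<exists>!x. m *v x = c"
    by (metis matrix_vector_mul_assoc matrix_vector_mul_lid)
qed

lemma congruence_cancel:
  fixes M :: "'a::field^'n^'n"
  assumes "invertible M"
  shows "M ** X ** transpose M = M ** Y ** transpose M \<longleftrightarrow> X = Y"
proof -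
  obtain B where B: "B ** M = mat 1"
    using assms invertible_def by blast
  have "B ** (M ** Z ** transpose M) ** transpose B = Z" for Z
  proof -
    have "B ** (M ** Z ** transpose M) ** transpose B
        = (B ** M) ** Z ** (transpose M ** transpose B)"
      by (simp add: matrix_mul_assoc)
    also have "transpose M ** transpose B = mat 1"
      by (metis B matrix_transpose_mul transpose_mat)
    finally show ?thesis by (simp add: B)
  qed
  then show ?thesis by metis
qed

definition cramer_numer :: "'a::comm_ring_1^'n^'n \<Rightarrow> 'a^'n \<Rightarrow> 'a^'n" where
  "cramer_numer m c = (\<chi> k. det (\<chi> i j. if j = k then c $ i else m $ i $ j))"

lemma cramer_numer_mult_vec: "cramer_numer m (m *v x) = det m *s (x :: 'a::field^'n)"
  by (simp add: cramer_numer_def cramer_lemma vec_eq_iff mult.commute)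

text \<open>\<open>kahan_mat 1 A p\<close> is the matrix of the linear system whose solution is the Kahan image
  of \<open>p\<close>; the scalar \<open>d\<close> replaces \<open>1\<close> when denominators are cleared.\<close>

definition kahan_mat :: "'a::comm_ring_1 \<Rightarrow> 'a^'n^'n \<Rightarrow> 'a^'n \<Rightarrow> 'a^'n^'n" where
  "kahan_mat d A p = mat d - diag (A *v p) - diag p ** A"

lemma kahan_mat_mult_vec:
  "(kahan_mat d A p *v y) $ i = d * y $ i - (A *v p) $ i * y $ i - p $ i * (A *v y) $ i"
  by (simp add: kahan_mat_def matrix_vector_mult_diff_rdistrib diag_mult_vec mat_mult_vec
      flip: matrix_vector_mul_assoc)

lemma kahan_mat_entry:
  "kahan_mat d A p $ i $ j = (if i = j then d - (A *v p) $ i else 0) - p $ i * A $ i $ j"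
  by (simp add: kahan_mat_def diag_mult_left) (simp add: diag_def mat_def)

lemma kahan_mat_swap:
  "kahan_mat d A p *v y + kahan_mat e A (- y) *v p = d *s y + e *s p"
  by (simp add: vec_eq_iff kahan_mat_mult_vec matrix_vector_mult_uminus algebra_simps)

lemma kahan_mat_affine:
  "kahan_mat d A (p + t *s u) $ i $ j = kahan_mat d A p $ i $ j + t * kahan_mat 0 A u $ i $ j"
  by (simp add: kahan_mat_entry matrix_vector_mult_def sum.distrib sum_distrib_left algebra_simps)

lemma kahan_mat_scale: "kahan_mat (d * e) A (d *s p) = mat d ** kahan_mat e A p"
  by (simp add: vec_eq_iff mat_mult_left kahan_mat_entry matrix_vector_mult_scale algebra_simps)

definition poisson_mat :: "'a::comm_ring_1^'n^'n \<Rightarrow> 'a^'n \<Rightarrow> 'a^'n^'n" where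
  "poisson_mat A p = diag p ** A ** diag p"

lemma poisson_mat_entry: "poisson_mat A p $ i $ j = p $ i * A $ i $ j * p $ j"
  by (simp add: poisson_mat_def mult_diag_right diag_mult_left)

lemma poisson_mat_scale: "poisson_mat A (d *s p) = mat d ** poisson_mat A p ** mat d"
  by (simp add: vec_eq_iff mat_mult_left mat_mult_right poisson_mat_entry mult_ac)

lemma transpose_poisson_mat:
  assumes "transpose A = - A"
  shows "transpose (poisson_mat A p) = - poisson_mat A p"
proof -
  have anti: "A $ j $ i = - A $ i $ j" for i j
    using arg_cong [OF assms, of "\<lambda>X. X $ i $ j"] by (simp add: transpose_def)
  have "transpose (poisson_mat A p) $ i $ j = - poisson_mat A p $ i $ j" for i j
    using anti [of i j] by (simp add: transpose_def poisson_mat_entry mult_ac)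
  then show ?thesis
    by (simp add: vec_eq_iff)
qed

text \<open>For \<open>d = 1\<close> and the Kahan image \<open>y\<close> of \<open>p\<close> this is \<open>M (J P(p) J\<^sup>T - P(y)) M\<^sup>T\<close>,
  where \<open>M = kahan_mat 1 A p\<close> and \<open>J\<close> is the Jacobian of the Kahan map, because
  \<open>M J = kahan_mat 1 A (- y)\<close>.\<close>

definition poisson_defect :: "'a::comm_ring_1^'n^'n \<Rightarrow> 'a \<Rightarrow> 'a^'n \<Rightarrow> 'a^'n \<Rightarrow> 'a^'n^'n" where
  "poisson_defect A d p y =
     kahan_mat d A (- y) ** poisson_mat A p ** transpose (kahan_mat d A (- y))
     - kahan_mat 1 A p ** poisson_mat A y ** transpose (kahan_mat 1 A p)"

lemma poisson_defect_homogeneous: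
  "poisson_defect A d p (d *s y) = mat d ** poisson_defect A 1 p y ** mat d"
proof -
  let ?K = "kahan_mat 1 A (- y)" and ?M = "kahan_mat 1 A p"
  have K: "kahan_mat d A (- (d *s y)) = mat d ** ?K"
    using kahan_mat_scale [of d 1 A "- y"] by simp
  have "mat d ** ?K ** poisson_mat A p ** transpose (mat d ** ?K)
      = mat d ** (?K ** poisson_mat A p ** transpose ?K) ** mat d"
    by (simp add: matrix_transpose_mul transpose_mat matrix_mul_assoc)
  moreover have "?M ** (mat d ** poisson_mat A y ** mat d) ** transpose ?M
      = mat d ** (?M ** poisson_mat A y ** transpose ?M) ** mat d"
  proof -
    have "?M ** (mat d ** poisson_mat A y ** mat d) ** transpose ?M
        = (?M ** mat d) ** poisson_mat A y ** (mat d ** transpose ?M)"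
      by (simp add: matrix_mul_assoc)
    also have "\<dots> = (mat d ** ?M) ** poisson_mat A y ** (transpose ?M ** mat d)"
      by (simp only: mat_mult_commute [of d ?M] mat_mult_commute [of d "transpose ?M"])
    finally show ?thesis by (simp add: matrix_mul_assoc)
  qed
  ultimately show ?thesis
    by (simp add: poisson_defect_def K poisson_mat_scale vec_eq_iff mat_mult_left mat_mult_right
        algebra_simps)
qed

lemma transpose_poisson_defect:
  assumes "transpose A = - A"
  shows "transpose (poisson_defect A d p y) = - poisson_defect A d p y"
  by (simp add: poisson_defect_def transpose_diff matrix_transpose_mul matrix_mul_assoc
      transpose_poisson_mat [OF assms] matrix_mult_uminus_left matrix_mult_uminus_right)

text \<open>By Cramer's rule the Kahan image of \<open>p\<close> is \<open>cramer_numer M p / det M\<close> for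
  \<open>M = kahan_mat 1 A p\<close>, so this is \<open>poisson_defect\<close> with the denominators cleared:
  its entries are polynomials in \<open>p\<close>.\<close>

definition kahan_defect :: "'a::comm_ring_1^'n^'n \<Rightarrow> 'a^'n \<Rightarrow> 'a^'n^'n" where
  "kahan_defect A p =
     poisson_defect A (det (kahan_mat 1 A p)) p (cramer_numer (kahan_mat 1 A p) p)"

section \<open>Vertices as the index type \<open>3\<close>\<close>

definition vert :: "3 \<Rightarrow> nat" where
  "vert i = (if i = 1 then 1 else if i = 2 then 2 else 3)"

definition vec3 :: "(nat \<Rightarrow> 'a) \<Rightarrow> 'a^3" where
  "vec3 p = (\<chi> i. p (vert i))"

definition mat3 :: "(nat \<Rightarrow> nat \<Rightarrow> 'a) \<Rightarrow> 'a^3^3" where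
  "mat3 A = (\<chi> i j. A (vert i) (vert j))"

lemma vert_simps [simp]: "vert 1 = 1" "vert 2 = 2" "vert 3 = 3"
  by (simp_all add: vert_def)

lemma bij_vert: "bij_betw vert UNIV verts"
  unfolding bij_betw_def inj_def verts_def UNIV_3 by (simp add: forall_3)

lemma vert_eq_iff [simp]: "vert i = vert j \<longleftrightarrow> i = j"
  using bij_vert by (auto simp: bij_betw_def inj_def)

lemma sum_verts: "(\<Sum>k\<in>verts. f k) = (\<Sum>i\<in>UNIV. f (vert i))"
  by (rule sum.reindex_bij_betw [OF bij_vert, symmetric])

lemma ball_verts: "(\<forall>k\<in>verts. P k) \<longleftrightarrow> (\<forall>i. P (vert i))"
  by (simp add: verts_def forall_3)

lemma vert_in_verts [simp]: "vert i \<in> verts"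
  using ball_verts [of "\<lambda>k. k \<in> verts"] by blast

lemma of_nat_vert: "of_nat (vert i) = i"
  using exhaust_3 [of i] by auto

lemma vec3_nth [simp]: "vec3 p $ i = p (vert i)"
  by (simp add: vec3_def)

lemma vec3_upd: "vec3 (p(vert k := t)) = (vec3 p - p (vert k) *s axis k 1) + t *s axis k 1"
  for p :: "nat \<Rightarrow> 'a::comm_ring_1"
  by (simp add: vec_eq_iff axis_def)

lemma vec3_bij: "bij_betw vec3 {y. \<forall>i. i \<notin> verts \<longrightarrow> y i = 0} UNIV"
proof (rule bij_betwI')
  fix y z :: "nat \<Rightarrow> 'a"
  assume y: "y \<in> {y. \<forall>i. i \<notin> verts \<longrightarrow> y i = 0}" and z: "z \<in> {y. \<forall>i. i \<notin> verts \<longrightarrow> y i = 0}"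
  show "vec3 y = vec3 z \<longleftrightarrow> y = z"
  proof
    assume "vec3 y = vec3 z"
    then have eq: "\<forall>k\<in>verts. y k = z k" by (simp add: vec_eq_iff ball_verts)
    show "y = z"
    proof
      fix n show "y n = z n" using eq y z by (cases "n \<in> verts") auto
    qed
  qed simp
next
  fix x :: "'a^3"
  show "\<exists>y \<in> {y. \<forall>i. i \<notin> verts \<longrightarrow> y i = 0}. x = vec3 y"
    by (rule bexI [of _ "\<lambda>n. if n \<in> verts then x $ of_nat n else 0"])
       (auto simp: vec_eq_iff of_nat_vert ball_verts [symmetric])
qed simp

lemma ex1_bij_betw:
  assumes "bij_betw f A UNIV"
  shows "(\<exists>!a. a \<in> A \<and> P (f a)) \<longleftrightarrow> (\<exists>!b. P b)"
proof -
  define g where "g = inv_into A f"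
  have g: "\<And>a. a \<in> A \<Longrightarrow> g (f a) = a" "\<And>b. g b \<in> A" "\<And>b. f (g b) = b"
    using assms bij_betw_inv_into_left [OF assms] bij_betw_inv_into_right [OF assms]
    unfolding g_def bij_betw_def by (auto intro: inv_into_into)
  show ?thesis
  proof
    assume "\<exists>!a. a \<in> A \<and> P (f a)"
    then obtain a where a: "P (f a)" and uniq: "\<And>a'. a' \<in> A \<Longrightarrow> P (f a') \<Longrightarrow> a' = a"
      by blast
    show "\<exists>!b. P b"
    proof (rule ex1I [of _ "f a"])
      fix b assume "P b"
      then have "g b = a" using uniq [of "g b"] g by simp
      then show "b = f a" using g(3) [of b] by simp
    qed (rule a)
  next
    assume "\<exists>!b. P b"
    then obtain b where b: "P b" and uniq: "\<And>b'. P b' \<Longrightarrow> b' = b"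
      by blast
    show "\<exists>!a. a \<in> A \<and> P (f a)"
    proof (rule ex1I [of _ "g b"])
      show "g b \<in> A \<and> P (f (g b))" using b g by simp
      fix a assume "a \<in> A \<and> P (f a)"
      then show "a = g b" using uniq [of "f a"] g(1) [of a] by simp
    qed
  qed
qed

lemma mat3_mult_vec3: "(mat3 A *v vec3 q) $ i = (\<Sum>j\<in>verts. A (vert i) j * q j)"
  by (simp add: mat3_def matrix_vector_mult_def sum_verts)

lemma kahan_sys_iff_kahan_mat:
  "kahan_sys A p y \<longleftrightarrow>
     (\<forall>i. i \<notin> verts \<longrightarrow> y i = 0) \<and> kahan_mat 1 (mat3 A) (vec3 p) *v vec3 y = vec3 p"
  by (simp add: kahan_sys_def ball_verts vec_eq_iff kahan_mat_mult_vec mat3_mult_vec3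
      algebra_simps)

lemma kahan_regular_iff_det:
  "kahan_regular A p \<longleftrightarrow> det (kahan_mat 1 (mat3 A) (vec3 p)) \<noteq> 0"
proof -
  let ?V = "{y. \<forall>i. i \<notin> verts \<longrightarrow> y i = 0}" and ?M = "kahan_mat 1 (mat3 A) (vec3 p)"
  have "kahan_regular A p \<longleftrightarrow> (\<exists>!y. y \<in> ?V \<and> ?M *v vec3 y = vec3 p)"
    by (simp add: kahan_regular_def kahan_sys_iff_kahan_mat)
  also have "\<dots> \<longleftrightarrow> (\<exists>!x. ?M *v x = vec3 p)"
    by (rule ex1_bij_betw [OF vec3_bij])
  finally show ?thesis by (simp add: unique_solution_iff_det_nz)
qed

lemma kahan_mat_mult_kahan:
  assumes "kahan_regular A p"
  shows "kahan_mat 1 (mat3 A) (vec3 p) *v vec3 (kahan A p) = vec3 p"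
  using theI' [OF assms [unfolded kahan_regular_def]] by (simp add: kahan_def kahan_sys_iff_kahan_mat)

section \<open>The derivative of the Kahan map\<close>

lemma field_differentiable_det3:
  fixes M :: "'a::real_normed_field \<Rightarrow> 'a^3^3"
  assumes "\<And>i j. (\<lambda>t. M t $ i $ j) field_differentiable at x"
  shows "(\<lambda>t. det (M t)) field_differentiable at x"
  unfolding det_3
  by (intro field_differentiable_add field_differentiable_diff field_differentiable_mult assms)

lemma implicit_derivative_linear_system:
  fixes M :: "'a::real_normed_field \<Rightarrow> 'a^'n^'n"
  assumes M': "\<And>i j. ((\<lambda>t. M t $ i $ j) has_field_derivative M' $ i $ j) (at x)"
    and Y': "\<And>j. ((\<lambda>t. Y t $ j) has_field_derivative Y' $ j) (at x)"
    and c': "\<And>i. ((\<lambda>t. c t $ i) has_field_derivative c' $ i) (at x)"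
    and eq: "\<forall>\<^sub>F t in nhds x. M t *v Y t = c t"
  shows "M x *v Y' + M' *v Y x = c'"
proof -
  have deriv: "((\<lambda>t. (M t *v Y t) $ i) has_field_derivative (M x *v Y' + M' *v Y x) $ i) (at x)"
    for i
  proof -
    have "((\<lambda>t. \<Sum>j\<in>UNIV. M t $ i $ j * Y t $ j) has_field_derivative
        (\<Sum>j\<in>UNIV. M' $ i $ j * Y x $ j + Y' $ j * M x $ i $ j)) (at x)"
      by (rule DERIV_sum) (rule DERIV_mult [OF M' Y'])
    then show ?thesis
      by (simp add: matrix_vector_mult_def sum.distrib mult.commute add.commute)
  qed
  have "((\<lambda>t. c t $ i) has_field_derivative (M x *v Y' + M' *v Y x) $ i) (at x)" for i
  proof -
    have ev: "\<forall>\<^sub>F t in nhds x. (M t *v Y t) $ i = c t $ i"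
      using eq by (rule eventually_mono) simp
    show ?thesis
      using deriv [of i] by (subst (asm) DERIV_cong_ev [OF refl ev refl])
  qed
  then have "(M x *v Y' + M' *v Y x) $ i = c' $ i" for i
    using c' by (rule DERIV_unique)
  then show ?thesis by (simp add: vec_eq_iff)
qed

lemma kahan_mat_line_deriv:
  "((\<lambda>t. kahan_mat d A (p + t *s u) $ i $ j) has_field_derivative kahan_mat 0 A u $ i $ j) (at x)"
  unfolding kahan_mat_affine by (auto intro!: derivative_eq_intros)

lemma eventually_kahan_regular_line:
  assumes "kahan_regular A p"
  shows "\<forall>\<^sub>F t in nhds (p (vert k)). kahan_regular A (p(vert k := t))"
proof -
  let ?D = "\<lambda>t. det (kahan_mat 1 (mat3 A) (vec3 (p(vert k := t))))"
  have "?D field_differentiable at t" for t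
  proof -
    have "(\<lambda>t. kahan_mat 1 (mat3 A) ((vec3 p - p (vert k) *s axis k 1) + t *s axis k 1) $ i $ j)
        field_differentiable at t" for i j
      unfolding field_differentiable_def by (rule exI, rule kahan_mat_line_deriv)
    then show ?thesis unfolding vec3_upd by (rule field_differentiable_det3)
  qed
  then have "continuous_on UNIV ?D"
    by (intro continuous_at_imp_continuous_on ballI field_differentiable_imp_continuous_at)
  then have "open {t. ?D t \<noteq> 0}"
    by (rule open_Collect_neq [OF _ continuous_on_const])
  moreover have "p (vert k) \<in> {t. ?D t \<noteq> 0}"
    using assms by (simp add: kahan_regular_iff_det)
  ultimately have "\<forall>\<^sub>F t in nhds (p (vert k)). t \<in> {t. ?D t \<noteq> 0}"
    by (rule eventually_nhds_in_open)
  then show ?thesis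
    by (rule eventually_mono) (simp add: kahan_regular_iff_det)
qed

definition kahan_jacobian :: "(nat \<Rightarrow> nat \<Rightarrow> 'a::real_normed_field) \<Rightarrow> (nat \<Rightarrow> 'a) \<Rightarrow> 'a^3^3" where
  "kahan_jacobian A p = (\<chi> i k. pderiv3 (\<lambda>q. kahan A q (vert i)) (vert k) p)"

lemma kahan_has_partial_derivative:
  assumes reg: "kahan_regular A p"
  shows "((\<lambda>t. kahan A (p(vert k := t)) (vert j)) has_field_derivative kahan_jacobian A p $ j $ k)
           (at (p (vert k)))"
proof -
  let ?q = "\<lambda>t. vec3 (p(vert k := t))"
  let ?M = "\<lambda>t. kahan_mat 1 (mat3 A) (?q t)"
  let ?f = "\<lambda>t. cramer_numer (?M t) (?q t) $ j / det (?M t)"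
  have M_diff: "(\<lambda>t. ?M t $ i $ l) field_differentiable at t" for i l t
    unfolding vec3_upd field_differentiable_def by (rule exI, rule kahan_mat_line_deriv)
  have q_diff: "(\<lambda>t. if i = k then t else p (vert i)) field_differentiable at t" for i t
    by (cases "i = k") (simp_all add: field_differentiable_ident field_differentiable_const)
  have numer_diff: "(\<lambda>t. cramer_numer (?M t) (?q t) $ j) field_differentiable at t" for t
    unfolding cramer_numer_def vec_lambda_beta
  proof (rule field_differentiable_det3)
    fix i l
    show "(\<lambda>t. (\<chi> i l. if l = j then ?q t $ i else ?M t $ i $ l) $ i $ l) field_differentiable at t"
      by (cases "l = j") (simp_all add: M_diff q_diff)
  qed
  have det_diff: "(\<lambda>t. det (?M t)) field_differentiable at t" for t
    by (rule field_differentiable_det3) (rule M_diff)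
  have "det (?M (p (vert k))) \<noteq> 0"
    using reg by (simp add: kahan_regular_iff_det)
  with numer_diff det_diff have "?f field_differentiable at (p (vert k))"
    by (rule field_differentiable_divide)
  then obtain D where D: "(?f has_field_derivative D) (at (p (vert k)))"
    unfolding field_differentiable_def by blast
  have ev: "\<forall>\<^sub>F t in nhds (p (vert k)). kahan A (p(vert k := t)) (vert j) = ?f t"
    using eventually_kahan_regular_line [OF reg]
  proof (rule eventually_mono)
    fix t assume reg_t: "kahan_regular A (p(vert k := t))"
    have "cramer_numer (?M t) (?q t) = det (?M t) *s vec3 (kahan A (p(vert k := t)))"
      using cramer_numer_mult_vec [of "?M t" "vec3 (kahan A (p(vert k := t)))"]
        kahan_mat_mult_kahan [OF reg_t]
      by simp
    moreover have "det (?M t) \<noteq> 0"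
      using reg_t by (simp add: kahan_regular_iff_det)
    ultimately show "kahan A (p(vert k := t)) (vert j) = ?f t" by simp
  qed
  have "((\<lambda>t. kahan A (p(vert k := t)) (vert j)) has_field_derivative D) (at (p (vert k)))"
    by (simp only: DERIV_cong_ev [OF refl ev refl] D)
  with DERIV_imp_deriv [OF this] show ?thesis
    by (simp add: kahan_jacobian_def pderiv3_def)
qed

lemma kahan_jacobian_eq:
  assumes reg: "kahan_regular A p"
  shows "kahan_mat 1 (mat3 A) (vec3 p) ** kahan_jacobian A p
       = kahan_mat 1 (mat3 A) (- vec3 (kahan A p))"
proof -
  let ?Am = "mat3 A" and ?y = "vec3 (kahan A p)" and ?J = "kahan_jacobian A p"
  have "kahan_mat 1 ?Am (vec3 p) *v column k ?J = kahan_mat 1 ?Am (- ?y) *v axis k 1" for k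
  proof -
    let ?u = "axis k 1 :: 'a^3"
    have "kahan_mat 1 ?Am (vec3 (p(vert k := p (vert k)))) *v column k ?J
        + kahan_mat 0 ?Am ?u *v vec3 (kahan A (p(vert k := p (vert k)))) = ?u"
    proof (rule implicit_derivative_linear_system [where x = "p (vert k)"
          and M = "\<lambda>t. kahan_mat 1 ?Am (vec3 (p(vert k := t)))"
          and Y = "\<lambda>t. vec3 (kahan A (p(vert k := t)))" and c = "\<lambda>t. vec3 (p(vert k := t))"])
      show "((\<lambda>t. kahan_mat 1 ?Am (vec3 (p(vert k := t))) $ i $ j) has_field_derivative
          kahan_mat 0 ?Am ?u $ i $ j) (at (p (vert k)))" for i j
        unfolding vec3_upd by (rule kahan_mat_line_deriv)
      show "((\<lambda>t. vec3 (kahan A (p(vert k := t))) $ j) has_field_derivative column k ?J $ j)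
          (at (p (vert k)))" for j
        using kahan_has_partial_derivative [OF reg] by (simp add: column_def)
      show "((\<lambda>t. vec3 (p(vert k := t)) $ i) has_field_derivative ?u $ i) (at (p (vert k)))" for i
        by (cases "i = k") (simp_all add: axis_def DERIV_ident DERIV_const)
      show "\<forall>\<^sub>F t in nhds (p (vert k)).
          kahan_mat 1 ?Am (vec3 (p(vert k := t))) *v vec3 (kahan A (p(vert k := t)))
            = vec3 (p(vert k := t))"
        using eventually_kahan_regular_line [OF reg] by (rule eventually_mono) (rule kahan_mat_mult_kahan)
    qed
    then have "kahan_mat 1 ?Am (vec3 p) *v column k ?J = ?u - kahan_mat 0 ?Am ?u *v ?y"
      by (simp add: eq_diff_eq)
    also have "\<dots> = kahan_mat 1 ?Am (- ?y) *v ?u"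
      using kahan_mat_swap [of 0 ?Am ?u ?y 1] by (simp add: diff_eq_eq add.commute)
    finally show ?thesis .
  qed
  then have "(kahan_mat 1 ?Am (vec3 p) ** ?J) $ i $ k = kahan_mat 1 ?Am (- ?y) $ i $ k" for i k
    by (simp add: matrix_mult_entry_column matrix_vector_mult_axis)
  then show ?thesis by (simp add: vec_eq_iff)
qed

section \<open>The Poisson criterion\<close>

lemma pbracket_kahan:
  "pbracket A (\<lambda>q. kahan A q (vert i)) (\<lambda>q. kahan A q (vert j)) p =
     (kahan_jacobian A p ** poisson_mat (mat3 A) (vec3 p) ** transpose (kahan_jacobian A p)) $ i $ j"
  by (simp add: pbracket_def sum_verts kahan_jacobian_def matrix_matrix_mult_def transpose_def
      poisson_mat_entry mat3_def sum_3 algebra_simps)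

lemma kahan_poisson_at_iff:
  assumes reg: "kahan_regular A p"
  shows "(\<forall>i\<in>verts. \<forall>j\<in>verts. pbracket A (\<lambda>q. kahan A q i) (\<lambda>q. kahan A q j) p
            = A i j * kahan A p i * kahan A p j)
     \<longleftrightarrow> poisson_defect (mat3 A) 1 (vec3 p) (vec3 (kahan A p)) = 0"
proof -
  let ?M = "kahan_mat 1 (mat3 A) (vec3 p)" and ?B = "kahan_mat 1 (mat3 A) (- vec3 (kahan A p))"
    and ?J = "kahan_jacobian A p"
    and ?P = "poisson_mat (mat3 A) (vec3 p)" and ?Q = "poisson_mat (mat3 A) (vec3 (kahan A p))"
  have "(\<forall>i\<in>verts. \<forall>j\<in>verts. pbracket A (\<lambda>q. kahan A q i) (\<lambda>q. kahan A q j) p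
            = A i j * kahan A p i * kahan A p j) \<longleftrightarrow> ?J ** ?P ** transpose ?J = ?Q"
    by (simp add: ball_verts pbracket_kahan vec_eq_iff poisson_mat_entry mat3_def mult_ac)
  also have "\<dots> \<longleftrightarrow> ?M ** (?J ** ?P ** transpose ?J) ** transpose ?M = ?M ** ?Q ** transpose ?M"
    using reg by (simp add: congruence_cancel invertible_det_nz kahan_regular_iff_det)
  also have "?M ** (?J ** ?P ** transpose ?J) ** transpose ?M = ?B ** ?P ** transpose ?B"
    by (simp add: kahan_jacobian_eq [OF reg, symmetric] matrix_transpose_mul matrix_mul_assoc)
  finally show ?thesis
    by (simp add: poisson_defect_def)
qed

theorem kahan_poisson_iff_defect:
  "kahan_poisson A \<longleftrightarrow> (\<forall>v. det (kahan_mat 1 (mat3 A) v) \<noteq> 0 \<longrightarrow> kahan_defect (mat3 A) v = 0)"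
proof -
  have at_p: "(\<forall>i\<in>verts. \<forall>j\<in>verts. pbracket A (\<lambda>q. kahan A q i) (\<lambda>q. kahan A q j) p
            = A i j * kahan A p i * kahan A p j) \<longleftrightarrow> kahan_defect (mat3 A) (vec3 p) = 0"
    if reg: "kahan_regular A p" for p
  proof -
    let ?M = "kahan_mat 1 (mat3 A) (vec3 p)" and ?y = "vec3 (kahan A p)"
    have "cramer_numer ?M (vec3 p) = det ?M *s ?y"
      using cramer_numer_mult_vec [of ?M ?y] kahan_mat_mult_kahan [OF reg] by simp
    then have "kahan_defect (mat3 A) (vec3 p)
        = mat (det ?M) ** poisson_defect (mat3 A) 1 (vec3 p) ?y ** mat (det ?M)"
      by (simp add: kahan_defect_def poisson_defect_homogeneous)
    moreover have "det ?M \<noteq> 0"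
      using reg by (simp add: kahan_regular_iff_det)
    ultimately show ?thesis
      by (simp add: kahan_poisson_at_iff [OF reg] vec_eq_iff mat_mult_left mat_mult_right)
  qed
  have "kahan_poisson A \<longleftrightarrow> (\<forall>p. kahan_regular A p \<longrightarrow> kahan_defect (mat3 A) (vec3 p) = 0)"
    unfolding kahan_poisson_def using at_p by blast
  also have "\<dots> \<longleftrightarrow> (\<forall>v. det (kahan_mat 1 (mat3 A) v) \<noteq> 0 \<longrightarrow> kahan_defect (mat3 A) v = 0)"
  proof -
    have "v = vec3 (\<lambda>n. v $ of_nat n)" for v :: "'a^3"
      by (simp add: vec_eq_iff of_nat_vert)
    then show ?thesis
      unfolding kahan_regular_iff_det by metis
  qed
  finally show ?thesis .
qed

section \<open>The graph with weights \<open>1\<close>, \<open>\<alpha>\<close>, \<open>\<beta>\<close>\<close>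

definition graph_mat :: "'a::comm_ring_1 \<Rightarrow> 'a \<Rightarrow> 'a^3^3" where
  "graph_mat \<alpha> \<beta> = vector [vector [0, 1, \<alpha>], vector [-1, 0, \<beta>], vector [-\<alpha>, -\<beta>, 0]]"

lemma mat3_graph3: "mat3 (graph3 \<alpha> \<beta>) = graph_mat \<alpha> \<beta>"
  by (simp add: vec_eq_iff forall_3 mat3_def graph3_def graph_mat_def)

lemma transpose_graph_mat: "transpose (graph_mat \<alpha> \<beta>) = - graph_mat \<alpha> \<beta>"
  by (simp add: vec_eq_iff forall_3 transpose_def graph_mat_def)

lemmas graph_defect_expand = kahan_defect_def poisson_defect_def cramer_numer_def poisson_mat_def
  kahan_mat_def diag_def graph_mat_def matrix_matrix_mult_def matrix_vector_mult_def transpose_def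
  mat_def det_3 sum_3

lemma graph_defect_entries_vanish:
  fixes x y z :: "'a::idom"
  shows "\<forall>(\<alpha>, \<beta>) \<in> {(0,0), (0,-1), (1,0), (1,-1), (1,1), (-1,-1)}. \<forall>(i, j) \<in> {(1,2), (1,3), (2,3)}.
           kahan_defect (graph_mat \<alpha> \<beta>) (vector [x, y, z]) $ i $ j = 0"
  by (simp only: ball_simps prod.case; intro conjI TrueI; simp add: graph_defect_expand; algebra)

lemma graph_defect_vanishes:
  fixes \<alpha> \<beta> :: "'a::field_char_0"
  assumes "(\<alpha>, \<beta>) \<in> {(0,0), (0,-1), (1,0), (1,-1), (1,1), (-1,-1)}"
  shows "kahan_defect (graph_mat \<alpha> \<beta>) v = 0"
proof -
  have "v = vector [v $ 1, v $ 2, v $ 3]"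
    by (simp add: vec_eq_iff forall_3)
  then obtain x y z where v: "v = vector [x, y, z]" by blast
  have "transpose (kahan_defect (graph_mat \<alpha> \<beta>) v) = - kahan_defect (graph_mat \<alpha> \<beta>) v"
    unfolding kahan_defect_def by (rule transpose_poisson_defect [OF transpose_graph_mat])
  then show ?thesis
    using graph_defect_entries_vanish [of x y z] assms by (auto simp: antisymmetric3_eq_0_iff v)
qed

text \<open>The homogeneous part of lowest degree, namely 5, of \<open>kahan_defect (graph_mat \<alpha> \<beta>) v\<close>.\<close>

definition leading_defect :: "'a::comm_ring_1 \<Rightarrow> 'a \<Rightarrow> 'a^3 \<Rightarrow> 'a^3^3" where
  "leading_defect \<alpha> \<beta> v =
    (let x = v $ 1; y = v $ 2; z = v $ 3;
       l12 = 2*x*y*z * (\<alpha> - \<beta>) * (\<alpha>*(\<alpha> - 1)*x^2 - \<beta>*(\<beta> + 1)*y^2 - \<alpha>*\<beta>*(\<alpha> + \<beta>)*z^2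
                                 + 2*\<alpha>*\<beta>*(1 - \<alpha>)*x*z - 2*\<alpha>*\<beta>*(1 + \<beta>)*y*z);
       l13 = 2*x*y*z * (1 + \<beta>) * (\<alpha>*(1 - \<alpha>)*x^2 + \<beta>*(1 - \<beta>)*y^2 + \<alpha>*\<beta>*(\<alpha> - \<beta>)*z^2
                                 + 2*\<beta>*(1 - \<alpha>)*x*y + 2*\<beta>*(\<alpha> - \<beta>)*y*z);
       l23 = 2*x*y*z * (\<alpha> - 1) * (\<alpha>*(\<alpha> + 1)*x^2 + \<beta>*(1 + \<beta>)*y^2 - \<alpha>*\<beta>*(\<alpha> - \<beta>)*z^2
                                 + 2*\<alpha>*(1 + \<beta>)*x*y + 2*\<alpha>*(\<alpha> - \<beta>)*x*z)
     in vector [vector [0, l12, l13], vector [-l12, 0, l23], vector [-l13, -l23, 0]])"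

text \<open>The defect has homogeneous parts of degrees 5, 6 and 7 only; the upper two are
  recovered from its values at \<open>v\<close> and \<open>-v\<close>.\<close>

lemma graph_defect_scaling:
  fixes \<alpha> \<beta> x y z s :: "'a::idom"
  defines "\<Delta> w i j \<equiv> kahan_defect (graph_mat \<alpha> \<beta>) w $ i $ j"
    and "L i j \<equiv> leading_defect \<alpha> \<beta> (vector [x, y, z]) $ i $ j"
  shows "\<forall>(i, j) \<in> {(1,2), (1,3), (2,3)}. 2 * \<Delta> (s *s vector [x, y, z]) i j =
           s^5 * (2 * L i j + s * (\<Delta> (vector [x, y, z]) i j + \<Delta> (- vector [x, y, z]) i j)
                  + s^2 * (\<Delta> (vector [x, y, z]) i j - \<Delta> (- vector [x, y, z]) i j - 2 * L i j))"
  unfolding \<Delta>_def L_def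
  by (simp only: ball_simps prod.case; intro conjI TrueI;
      simp add: graph_defect_expand leading_defect_def Let_def; algebra)

lemma lowest_coeff_eq_0:
  fixes c0 c1 c2 :: "'a::real_normed_field"
  assumes "\<forall>\<^sub>F s in at 0. s ^ n * (c0 + s * c1 + s^2 * c2) = 0"
  shows "c0 = 0"
proof -
  have "\<forall>\<^sub>F s in at (0::'a). s \<noteq> 0"
    by (simp add: eventually_at_filter)
  with assms have "\<forall>\<^sub>F s in at 0. c0 + s * c1 + s^2 * c2 = 0"
    by eventually_elim simp
  then have "((\<lambda>s. c0 + s * c1 + s^2 * c2) \<longlongrightarrow> 0) (at 0)"
    by (rule tendsto_eventually)
  moreover have "((\<lambda>s. c0 + s * c1 + s^2 * c2) \<longlongrightarrow> c0) (at 0)"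
    by (auto intro!: tendsto_eq_intros)
  ultimately show ?thesis
    using tendsto_unique [OF at_neq_bot] by blast
qed

lemma eventually_det_kahan_mat_at_0:
  fixes A :: "'a::real_normed_field^3^3"
  shows "\<forall>\<^sub>F s in at 0. det (kahan_mat 1 A (s *s v)) \<noteq> 0"
proof -
  have "(\<lambda>s. kahan_mat 1 A (0 + s *s v) $ i $ j) field_differentiable at 0" for i j
    unfolding field_differentiable_def by (rule exI, rule kahan_mat_line_deriv)
  then have "(\<lambda>s. det (kahan_mat 1 A (0 + s *s v))) field_differentiable at 0"
    by (rule field_differentiable_det3)
  then have "isCont (\<lambda>s. det (kahan_mat 1 A (0 + s *s v))) 0"
    by (rule field_differentiable_imp_continuous_at)
  moreover have "kahan_mat 1 A 0 = mat 1"
    by (simp add: vec_eq_iff kahan_mat_entry mat_def)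
  ultimately have "((\<lambda>s. det (kahan_mat 1 A (s *s v))) \<longlongrightarrow> 1) (at 0)"
    by (simp add: isCont_def)
  then show ?thesis
    by (rule tendsto_imp_eventually_ne) simp
qed

lemma graph_leading_defect_vanishes:
  fixes \<alpha> \<beta> :: "'a::real_normed_field"
  assumes "kahan_poisson (graph3 \<alpha> \<beta>)" and ij: "(i, j) \<in> {(1,2), (1,3), (2,3)}"
  shows "leading_defect \<alpha> \<beta> v $ i $ j = 0"
proof -
  have "v = vector [v $ 1, v $ 2, v $ 3]"
    by (simp add: vec_eq_iff forall_3)
  then obtain x y z where v: "v = vector [x, y, z]" by blast
  let ?L = "leading_defect \<alpha> \<beta> v $ i $ j"
    and ?\<Delta> = "\<lambda>w. kahan_defect (graph_mat \<alpha> \<beta>) w $ i $ j"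
  have scaling: "2 * ?\<Delta> (s *s v)
      = s^5 * (2 * ?L + s * (?\<Delta> v + ?\<Delta> (- v)) + s^2 * (?\<Delta> v - ?\<Delta> (- v) - 2 * ?L))" for s
    using graph_defect_scaling [of \<alpha> \<beta> s x y z] ij unfolding v by auto
  have vanish: "kahan_defect (graph_mat \<alpha> \<beta>) w = 0"
    if "det (kahan_mat 1 (graph_mat \<alpha> \<beta>) w) \<noteq> 0" for w
    using assms(1) that by (simp add: kahan_poisson_iff_defect mat3_graph3)
  have "\<forall>\<^sub>F s in at 0.
      s ^ 5 * (2 * ?L + s * (?\<Delta> v + ?\<Delta> (- v)) + s^2 * (?\<Delta> v - ?\<Delta> (- v) - 2 * ?L)) = 0"
    using eventually_det_kahan_mat_at_0 [of "graph_mat \<alpha> \<beta>" v]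
    by eventually_elim (simp add: scaling [symmetric] vanish)
  then have "2 * ?L = 0"
    by (rule lowest_coeff_eq_0)
  then show ?thesis by simp
qed

text \<open>Three points on a line isolate the coefficient of \<open>y\<^sup>2\<close> (respectively \<open>x\<^sup>2\<close>) in the
  quadratic factor of an entry of \<open>leading_defect\<close>.\<close>

lemma graph_params_if_leading_defect_0:
  fixes \<alpha> \<beta> :: "'a::field_char_0"
  assumes L: "\<And>v i j. (i, j) \<in> {(1,2), (1,3), (2,3)} \<Longrightarrow> leading_defect \<alpha> \<beta> v $ i $ j = 0"
  shows "(\<alpha>, \<beta>) \<in> {(0,0), (0,-1), (1,0), (1,-1), (1,1), (-1,-1)}"
proof -
  have l12: "leading_defect \<alpha> \<beta> v $ 1 $ 2 = 0" and l13: "leading_defect \<alpha> \<beta> v $ 1 $ 3 = 0"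
    and l23: "leading_defect \<alpha> \<beta> v $ 2 $ 3 = 0" for v
    using L by auto
  note evaluate = leading_defect_def Let_def vector_3 power_one mult_1 mult_1_right
  have "\<beta> * (\<beta> - 1) * (\<beta> + 1) = 0"
    using l13 [of "vector [1, 1, 1]"] l13 [of "vector [1, 2, 1]"] l13 [of "vector [1, 3, 1]"]
    unfolding evaluate by algebra
  then have \<beta>: "\<beta> = 0 \<or> \<beta> = 1 \<or> \<beta> = -1"
    by (simp add: eq_neg_iff_add_eq_0)
  have "\<alpha> * (\<alpha> - 1) * (\<alpha> + 1) = 0"
    using l23 [of "vector [1, 1, 1]"] l23 [of "vector [2, 1, 1]"] l23 [of "vector [3, 1, 1]"]
    unfolding evaluate by algebra
  then have \<alpha>: "\<alpha> = 0 \<or> \<alpha> = 1 \<or> \<alpha> = -1"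
    by (simp add: eq_neg_iff_add_eq_0)
  have "(\<alpha> - \<beta>) * \<alpha> * (\<alpha> - 1) = 0"
    using l12 [of "vector [1, 1, 1]"] l12 [of "vector [2, 1, 1]"] l12 [of "vector [3, 1, 1]"]
    unfolding evaluate by algebra
  moreover have "(\<alpha> - \<beta>) * \<beta> * (\<beta> + 1) = 0"
    using l12 [of "vector [1, 1, 1]"] l12 [of "vector [1, 2, 1]"] l12 [of "vector [1, 3, 1]"]
    unfolding evaluate by algebra
  ultimately show ?thesis
    using \<alpha> \<beta> by auto
qed

lemma kahan_poisson_graph3_iff:
  fixes \<alpha> \<beta> :: "'a::real_normed_field"
  shows "kahan_poisson (graph3 \<alpha> \<beta>) \<longleftrightarrow> (\<alpha>, \<beta>) \<in> {(0,0), (0,-1), (1,0), (1,-1), (1,1), (-1,-1)}"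
proof
  assume "kahan_poisson (graph3 \<alpha> \<beta>)"
  then show "(\<alpha>, \<beta>) \<in> {(0,0), (0,-1), (1,0), (1,-1), (1,1), (-1,-1)}"
    by (intro graph_params_if_leading_defect_0 graph_leading_defect_vanishes)
next
  assume "(\<alpha>, \<beta>) \<in> {(0,0), (0,-1), (1,0), (1,-1), (1,1), (-1,-1)}"
  then show "kahan_poisson (graph3 \<alpha> \<beta>)"
    by (simp add: kahan_poisson_iff_defect mat3_graph3 graph_defect_vanishes)
qed

theorem mainTheorem5:
  shows "(\<forall>\<alpha> \<beta> :: real. kahan_poisson (graph3 \<alpha> \<beta>) \<longleftrightarrow>
            (\<alpha>, \<beta>) \<in> {(0,0), (0,-1), (1,0), (1,-1), (1,1), (-1,-1)})
       \<and> (\<forall>\<alpha> \<beta> :: complex. kahan_poisson (graph3 \<alpha> \<beta>) \<longleftrightarrow>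
            (\<alpha>, \<beta>) \<in> {(0,0), (0,-1), (1,0), (1,-1), (1,1), (-1,-1)})"
  by (intro conjI allI) (rule kahan_poisson_graph3_iff)+

end
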